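(* Let $\{(\hat p_h^k,\hat{\mathbf u}_h^k,\xi_h^k,\eta_h^{k+1})\}_{k=1}^N$ be a solution of Scheme-R with $\eta_h^k>0$ on $\Sigma$ for all $k=0,\dots,N+1$. Then for all $m=1,\dots,N$, $$E_h^m+\tau\sum_{k=1}^m\Big(2\mu\int_{\hat\Omega}\eta_h^k\big|(\nabla\hat{\mathbf u}_h^k(\mathbb F_h^k)^{-1})^{\rm S}\big|^2d\hat x+\gamma_3\|\partial_{x_1}\xi_h^k\|_{L^2(\Sigma)}^2+D^k_{num}\Big)=E_h^0,$$ where for $k=0,\dots,N$ $$E_h^k=\frac{\varrho_f}{2}\int_{\hat\Omega}\eta_h^k|\hat{\mathbf u}_h^k|^2d\hat x+\frac{\varrho_s}{2}\|\xi_h^k\|_{L^2(\Sigma)}^2+\frac{\gamma_1}{2}\|\partial_{x_1}\eta_h^{k+1}\|_{L^2(\Sigma)}^2+\frac{\gamma_2}{2}\|\partial^2_{x,h}\eta_h^{k+1}\|_{L^2(\Sigma)}^2,$$ $$D^k_{num}=\frac{\varrho_f\tau}{2}\int_{\hat\Omega}\eta_h^{k-1}|D_t\hat{\mathbf u}_h^k|^2d\hat x+\frac{\varrho_s\tau}{2}\|D_t\xi_h^k\|_{L^2(\Sigma)}^2+\frac{\gamma_1\tau}{2}\|\partial_{x_1}\xi_h^k\|_{L^2(\Sigma)}^2+\frac{\gamma_2\tau}{2}\|\partial^2_{x,h}\xi_h^k\|_{L^2(\Sigma)}^2\ \ (\ge0).$$ (Equivalently, with $\mathbf u_h^k=\hat{\mathbf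 u}_h^k\circ\mathcal A_{\eta_h^k}^{-1}$ on $\Omega_{\eta_h^k}$: $\int_{\hat\Omega}\eta_h^k|\hat{\mathbf u}_h^k|^2=\|\mathbf u_h^k\|^2_{L^2(\Omega_{\eta_h^k})}$ and $\int_{\hat\Omega}\eta_h^k|(\nabla\hat{\mathbf u}_h^k(\mathbb F_h^k)^{-1})^{\rm S}|^2=\|(\nabla\mathbf u_h^k)^{\rm S}\|^2_{L^2(\Omega_{\eta_h^k})}$.)
   Context: Setting: $\Sigma=(0,L_1)$, all functions $L_1$-periodic in the first variable; $\hat\Omega=\Sigma\times(0,1)$, $\Gamma_D=\Sigma\times\{0\}$; $\Omega_\eta=\{(x_1,x_2):x_1\in\Sigma,0<x_2<\eta(x_1)\}$, $\mathcal A_\eta(\hat x)=(\hat x_1,\eta\hat x_2)$; $\mathbb F(\eta)=\begin{pmatrix}1&0\\ \hat x_2\partial_{x_1}\eta&\eta\end{pmatrix}$, $\mathbb M(\eta)=\eta\mathbb F(\eta)^{-T}=\begin{pmatrix}\eta&-\hat x_2\partial_{x_1}\eta\\0&1\end{pmatrix}$; $(\nabla\mathbf u)_{ij}=\partial_ju_i$, $\mathbb A^{\rm S}=\frac12(\mathbb A+\mathbb A^T)$. Discrete spaces: $\mathcal T_h$ a shape-regular, quasi-uniform, periodic-compatible triangulation of $\hat\Omega$ of mesh size $h$, $\Sigma_h$ its trace partition on $\Sigma\times\{1\}$. $\hat V^f_h$: continuous, periodic $\mathbb R^2$-valued functions vanishing on $\Gamma_D$ whose components on each $K\in\mathcal T_h$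 lie in $\mathcal P^1(K)\oplus{\rm span}\{b_K\}$, $b_K$ the cubic bubble of $K$ (MINI element). $\hat Q^f_h$: continuous periodic piecewise affine functions on $\mathcal T_h$. $V^s_h$: continuous periodic piecewise affine functions on $\Sigma_h$. Discrete Laplacian $\partial^2_{x,h}:V^s_h\to V^s_h$: $\int_\Sigma\partial^2_{x,h}\eta\,\psi=-\int_\Sigma\partial_{x_1}\eta\,\partial_{x_1}\psi$ for all $\psi\in V^s_h$. $D_tv^k=(v^k-v^{k-1})/\tau$. $a_s(\eta,\zeta,\xi,\psi)=\int_\Sigma(\gamma_1\partial_{x_1}\eta\partial_{x_1}\psi+\gamma_2\partial_{x_1}\zeta\partial_{x_1}\psi+\gamma_3\partial_{x_1}\xi\partial_{x_1}\psi)$, constants $\varrho_f,\varrho_s,\mu,\gamma_1,\gamma_2>0,\gamma_3\ge0$. Scheme-R: given $\hat{\mathbf u}_h^0\in\hat V^f_h$, $\xi_h^0,\eta_h^0\in V^s_h$, set $\eta_h^1=\eta_h^0+\tau\xi_h^0$. For $k=1,\dots,N$ find $\hat p_h^k\in\hat Q^f_h$, $\hat{\mathbf u}_h^k\in\hat V^f_h$, $\xi_h^k,\eta_h^{k+1}\in V^s_h$ with $\hat{\mathbf u}_h^k(\hat x_1,1)=(0,\xi_h^k(\hat x_1))$, $\xi_h^k=D_t\eta_h^{k+1}$, such that for all $\hat q\in\hat Q^f_h$ and all $(\hat{\boldsymbol\varphi},\psi)\in\hat V^f_h\times V^s_h$ with $\hat{\boldsymbol\varphi}(\hat x_1,1)=(0,\psi(\hat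 x_1))$: (R1) $\int_{\hat\Omega}\hat q\,\nabla\hat{\mathbf u}_h^k:\mathbb M(\eta_h^k)=0$; (R2) $\varrho_f\int_{\hat\Omega}D_t\hat{\mathbf u}_h^k\cdot\hat{\boldsymbol\varphi}\,\eta_h^k+\frac12\varrho_f\int_{\hat\Omega}D_t\eta_h^k\,\hat{\mathbf u}_h^{k*}\cdot\hat{\boldsymbol\varphi}+\frac12\varrho_f\int_{\hat\Omega}\big(\hat{\boldsymbol\varphi}\cdot(\nabla\hat{\mathbf u}_h^k(\mathbb F_h^k)^{-1}\hat{\mathbf v}_h^{k-1})-\hat{\mathbf u}_h^k\cdot(\nabla\hat{\boldsymbol\varphi}(\mathbb F_h^k)^{-1}\hat{\mathbf v}_h^{k-1})\big)\eta_h^k+\int_{\hat\Omega}\hat{\boldsymbol\tau}_h^k:(\nabla\hat{\boldsymbol\varphi}(\mathbb F_h^k)^{-1})\eta_h^k+\varrho_s\int_\Sigma D_t\xi_h^k\psi+a_s(\eta_h^{k+1},\zeta_h^{k+1},\xi_h^k,\psi)=0$, where $\mathbb F_h^k=\mathbb F(\eta_h^k)$, $\hat{\mathbf u}_h^{k*}=2\hat{\mathbf u}_h^{k-1}-\hat{\mathbf u}_h^k$, $\hat{\mathbf w}_h^k=(0,\hat x_2D_t\eta_h^k)$, $\hat{\mathbf v}_h^{k-1}=\hat{\mathbf u}_h^{k-1}-\hat{\mathbf w}_h^k$, $\hat{\boldsymbol\tau}_h^k=2\mu(\nabla\hat{\mathbf u}_h^k(\mathbb F_h^k)^{-1})^{\rm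 S}-\hat p_h^k\mathbb I$, $\zeta_h^{k+1}=-\partial^2_{x,h}\eta_h^{k+1}$. *)

theory Defs
  imports "HOL-Analysis.Analysis"
begin

type_synonym pt = "real^2"

text \<open>Reference domain hat Omega = (0,L1) x (0,1), its closure, and the strip R x [0,1]
  on which L1-periodic (in x1) functions are represented.\<close>

definition Omega_hat :: "real \<Rightarrow> pt set" where
  "Omega_hat L1 = {x. 0 < x$1 \<and> x$1 < L1 \<and> 0 < x$2 \<and> x$2 < 1}"

definition Omega_hat_cl :: "real \<Rightarrow> pt set" where
  "Omega_hat_cl L1 = {x. 0 \<le> x$1 \<and> x$1 \<le> L1 \<and> 0 \<le> x$2 \<and> x$2 \<le> 1}"

definition strip :: "pt set" where
  "strip = {x. 0 \<le> x$2 \<and> x$2 \<le> 1}"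

definition periodic_triangulation :: "real \<Rightarrow> pt set set \<Rightarrow> bool" where
  "periodic_triangulation L1 T \<longleftrightarrow>
     finite T \<and> T \<noteq> {} \<and>
     (\<forall>K\<in>T. card K = 3 \<and> \<not> collinear K) \<and>
     \<Union> ((\<lambda>K. convex hull K) ` T) = Omega_hat_cl L1 \<and>
     (\<forall>K\<in>T. \<forall>K'\<in>T. K \<noteq> K' \<longrightarrow> convex hull K \<inter> convex hull K' = convex hull (K \<inter> K')) \<and>
     (\<forall>t. (vector [0, t] :: pt) \<in> \<Union>T \<longleftrightarrow> (vector [L1, t] :: pt) \<in> \<Union>T)"

definition bary :: "pt set \<Rightarrow> pt \<Rightarrow> pt \<Rightarrow> real" where
  "bary K x = (THE l. (\<forall>v. v \<notin> K \<longrightarrow> l v = 0) \<and> sum l K = 1 \<and> (\<Sum>v\<in>K. l v *\<^sub>R v) = x)"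

definition bubble :: "pt set \<Rightarrow> pt \<Rightarrow> real" where
  "bubble K x = (\<Prod>v\<in>K. bary K x v)"

definition P1_on :: "pt set \<Rightarrow> (pt \<Rightarrow> real) \<Rightarrow> bool" where
  "P1_on K f \<longleftrightarrow> (\<exists>a (b::pt). \<forall>x\<in>convex hull K. f x = a + inner b x)"

definition P1_bubble_on :: "pt set \<Rightarrow> (pt \<Rightarrow> real) \<Rightarrow> bool" where
  "P1_bubble_on K f \<longleftrightarrow> (\<exists>a (b::pt) c. \<forall>x\<in>convex hull K. f x = a + inner b x + c * bubble K x)"

definition Vf_h :: "real \<Rightarrow> pt set set \<Rightarrow> (pt \<Rightarrow> real^2) set" where
  "Vf_h L1 T = {u. continuous_on strip u \<and>
      (\<forall>x\<in>strip. u (x + vector [L1, 0]) = u x) \<and>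
      (\<forall>s\<in>{0<..<L1}. u (vector [s, 0]) = 0) \<and>
      (\<forall>K\<in>T. \<forall>i. P1_bubble_on K (\<lambda>x. u x $ i))}"

definition Qf_h :: "real \<Rightarrow> pt set set \<Rightarrow> (pt \<Rightarrow> real) set" where
  "Qf_h L1 T = {q. continuous_on strip q \<and>
      (\<forall>x\<in>strip. q (x + vector [L1, 0]) = q x) \<and>
      (\<forall>K\<in>T. P1_on K q)}"

definition top_cells :: "pt set set \<Rightarrow> real set set" where
  "top_cells T = {closed_segment (a$1) (b$1) | a b. \<exists>K\<in>T. a \<in> K \<and> b \<in> K \<and> a \<noteq> b \<and> a$2 = 1 \<and> b$2 = 1}"

definition Vs_h :: "real \<Rightarrow> pt set set \<Rightarrow> (real \<Rightarrow> real) set" where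
  "Vs_h L1 T = {e. continuous_on UNIV e \<and> (\<forall>s. e (s + L1) = e s) \<and>
      (\<forall>I\<in>top_cells T. \<exists>a b. \<forall>s\<in>I. e s = a + b * s)}"

text \<open>Pointwise (a.e.) derivatives of piecewise smooth functions; set to 0 where not
  differentiable (a null set for the discrete functions).  grad u x $ i $ j = d_j u_i.\<close>

definition dx :: "(real \<Rightarrow> real) \<Rightarrow> real \<Rightarrow> real" where
  "dx f s = (if f differentiable (at s) then deriv f s else 0)"

definition grad :: "(pt \<Rightarrow> real^2) \<Rightarrow> pt \<Rightarrow> real^2^2" where
  "grad u x = (if u differentiable (at x) then matrix (frechet_derivative u (at x)) else 0)"

definition mat2 :: "real \<Rightarrow> real \<Rightarrow> real \<Rightarrow> real \<Rightarrow> real^2^2" where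
  "mat2 a b c d = vector [vector [a, b], vector [c, d]]"

definition FF :: "(real \<Rightarrow> real) \<Rightarrow> pt \<Rightarrow> real^2^2" where
  "FF e x = mat2 1 0 (x$2 * dx e (x$1)) (e (x$1))"

definition MM :: "(real \<Rightarrow> real) \<Rightarrow> pt \<Rightarrow> real^2^2" where
  "MM e x = mat2 (e (x$1)) (- (x$2 * dx e (x$1))) 0 1"

definition symm :: "real^2^2 \<Rightarrow> real^2^2" where
  "symm A = (1/2) *\<^sub>R (A + transpose A)"

definition frob :: "real^2^2 \<Rightarrow> real^2^2 \<Rightarrow> real" where
  "frob A B = (\<Sum>i\<in>UNIV. \<Sum>j\<in>UNIV. A$i$j * B$i$j)"

definition intO :: "real \<Rightarrow> (pt \<Rightarrow> real) \<Rightarrow> real" where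
  "intO L1 f = (LINT x:Omega_hat L1|lebesgue. f x)"

definition intS :: "real \<Rightarrow> (real \<Rightarrow> real) \<Rightarrow> real" where
  "intS L1 g = (LINT s:{0<..<L1}|lebesgue. g s)"

definition is_disc_lap :: "real \<Rightarrow> pt set set \<Rightarrow> ((real \<Rightarrow> real) \<Rightarrow> real \<Rightarrow> real) \<Rightarrow> bool" where
  "is_disc_lap L1 T lap \<longleftrightarrow>
     (\<forall>e\<in>Vs_h L1 T. lap e \<in> Vs_h L1 T \<and>
        (\<forall>psi\<in>Vs_h L1 T. intS L1 (\<lambda>s. lap e s * psi s) = - intS L1 (\<lambda>s. dx e s * dx psi s)))"

definition R2_form ::
  "real \<Rightarrow> ((real \<Rightarrow> real) \<Rightarrow> real \<Rightarrow> real) \<Rightarrow> real \<Rightarrow> real \<Rightarrow> real \<Rightarrow> real \<Rightarrow> real \<Rightarrow> real \<Rightarrow> real \<Rightarrow>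
   (nat \<Rightarrow> pt \<Rightarrow> real) \<Rightarrow> (nat \<Rightarrow> pt \<Rightarrow> real^2) \<Rightarrow> (nat \<Rightarrow> real \<Rightarrow> real) \<Rightarrow> (nat \<Rightarrow> real \<Rightarrow> real) \<Rightarrow>
   nat \<Rightarrow> (pt \<Rightarrow> real^2) \<Rightarrow> (real \<Rightarrow> real) \<Rightarrow> real" where
  "R2_form L1 lap rho_f rho_s mu g1 g2 g3 tau p u xi eta k phi psi =
    (let Fi = (\<lambda>x. matrix_inv (FF (eta k) x));
         Dtu = (\<lambda>x. (1/tau) *\<^sub>R (u k x - u (k-1) x));
         Dteta = (\<lambda>s. (eta k s - eta (k-1) s) / tau);
         ustar = (\<lambda>x. 2 *\<^sub>R u (k-1) x - u k x);
         w = (\<lambda>x. vector [0, x$2 * Dteta (x$1)] :: real^2);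
         v = (\<lambda>x. u (k-1) x - w x);
         tauh = (\<lambda>x. (2 * mu) *\<^sub>R symm (grad (u k) x ** Fi x) - p k x *\<^sub>R mat 1);
         zeta = (\<lambda>s. - lap (eta (Suc k)) s)
     in rho_f * intO L1 (\<lambda>x. inner (Dtu x) (phi x) * eta k (x$1))
      + 1/2 * rho_f * intO L1 (\<lambda>x. Dteta (x$1) * inner (ustar x) (phi x))
      + 1/2 * rho_f * intO L1 (\<lambda>x. (inner (phi x) ((grad (u k) x ** Fi x) *v v x)
                                     - inner (u k x) ((grad phi x ** Fi x) *v v x)) * eta k (x$1))
      + intO L1 (\<lambda>x. frob (tauh x) (grad phi x ** Fi x) * eta k (x$1))
      + rho_s * intS L1 (\<lambda>s. (xi k s - xi (k-1) s) / tau * psi s)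
      + intS L1 (\<lambda>s. g1 * dx (eta (Suc k)) s * dx psi s + g2 * dx zeta s * dx psi s
                     + g3 * dx (xi k) s * dx psi s))"

definition schemeR ::
  "real \<Rightarrow> pt set set \<Rightarrow> ((real \<Rightarrow> real) \<Rightarrow> real \<Rightarrow> real) \<Rightarrow> real \<Rightarrow> real \<Rightarrow> real \<Rightarrow> real \<Rightarrow> real \<Rightarrow> real \<Rightarrow>
   real \<Rightarrow> nat \<Rightarrow>
   (nat \<Rightarrow> pt \<Rightarrow> real) \<Rightarrow> (nat \<Rightarrow> pt \<Rightarrow> real^2) \<Rightarrow> (nat \<Rightarrow> real \<Rightarrow> real) \<Rightarrow> (nat \<Rightarrow> real \<Rightarrow> real) \<Rightarrow> bool" where
  "schemeR L1 T lap rho_f rho_s mu g1 g2 g3 tau N p u xi eta \<longleftrightarrow>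
     u 0 \<in> Vf_h L1 T \<and> xi 0 \<in> Vs_h L1 T \<and> eta 0 \<in> Vs_h L1 T \<and>
     eta 1 = (\<lambda>s. eta 0 s + tau * xi 0 s) \<and>
     (\<forall>k\<in>{1..N}.
        p k \<in> Qf_h L1 T \<and> u k \<in> Vf_h L1 T \<and> xi k \<in> Vs_h L1 T \<and> eta (Suc k) \<in> Vs_h L1 T \<and>
        (\<forall>s\<in>{0<..<L1}. u k (vector [s, 1]) = vector [0, xi k s]) \<and>
        xi k = (\<lambda>s. (eta (Suc k) s - eta k s) / tau) \<and>
        (\<forall>q\<in>Qf_h L1 T. intO L1 (\<lambda>x. q x * frob (grad (u k) x) (MM (eta k) x)) = 0) \<and>
        (\<forall>phi\<in>Vf_h L1 T. \<forall>psi\<in>Vs_h L1 T.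
            (\<forall>s\<in>{0<..<L1}. phi (vector [s, 1]) = vector [0, psi s]) \<longrightarrow>
            R2_form L1 lap rho_f rho_s mu g1 g2 g3 tau p u xi eta k phi psi = 0))"

definition energy ::
  "real \<Rightarrow> ((real \<Rightarrow> real) \<Rightarrow> real \<Rightarrow> real) \<Rightarrow> real \<Rightarrow> real \<Rightarrow> real \<Rightarrow> real \<Rightarrow>
   (nat \<Rightarrow> pt \<Rightarrow> real^2) \<Rightarrow> (nat \<Rightarrow> real \<Rightarrow> real) \<Rightarrow> (nat \<Rightarrow> real \<Rightarrow> real) \<Rightarrow> nat \<Rightarrow> real" where
  "energy L1 lap rho_f rho_s g1 g2 u xi eta k =
      rho_f / 2 * intO L1 (\<lambda>x. eta k (x$1) * (norm (u k x))\<^sup>2)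
    + rho_s / 2 * intS L1 (\<lambda>s. (xi k s)\<^sup>2)
    + g1 / 2 * intS L1 (\<lambda>s. (dx (eta (Suc k)) s)\<^sup>2)
    + g2 / 2 * intS L1 (\<lambda>s. (lap (eta (Suc k)) s)\<^sup>2)"

definition Dnum ::
  "real \<Rightarrow> ((real \<Rightarrow> real) \<Rightarrow> real \<Rightarrow> real) \<Rightarrow> real \<Rightarrow> real \<Rightarrow> real \<Rightarrow> real \<Rightarrow> real \<Rightarrow>
   (nat \<Rightarrow> pt \<Rightarrow> real^2) \<Rightarrow> (nat \<Rightarrow> real \<Rightarrow> real) \<Rightarrow> (nat \<Rightarrow> real \<Rightarrow> real) \<Rightarrow> nat \<Rightarrow> real" where
  "Dnum L1 lap rho_f rho_s g1 g2 tau u xi eta k =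
      rho_f * tau / 2 * intO L1 (\<lambda>x. eta (k-1) (x$1) * (norm ((1/tau) *\<^sub>R (u k x - u (k-1) x)))\<^sup>2)
    + rho_s * tau / 2 * intS L1 (\<lambda>s. ((xi k s - xi (k-1) s) / tau)\<^sup>2)
    + g1 * tau / 2 * intS L1 (\<lambda>s. (dx (xi k) s)\<^sup>2)
    + g2 * tau / 2 * intS L1 (\<lambda>s. (lap (xi k) s)\<^sup>2)"

end

(*
  Testing the momentum equation (R2) with the discrete solution itself, (phi, psi) = (u^k, xi^k):
  the convective term vanishes by its skew-symmetric form, the pressure term by the
  incompressibility constraint (R1), and, because MM(eta) = eta F(eta)^(-T), the stress term
  becomes the viscous dissipation.  Every backward difference obeys
  2 tau ((a - b) / tau) a = a^2 - b^2 + tau^2 ((a - b) / tau)^2,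
  pointwise for the structure velocity, in an eta-weighted form for the fluid kinetic energy,
  and for the symmetric forms of the discrete membrane and bending energies.  Multiplying the
  tested equation by tau gives E^k + tau (dissipation^k) = E^(k-1), which telescopes.

  The analytic work is in splitting the integrals: the discrete functions are bounded and
  continuous off a negligible set (element boundaries and vertical lines through the vertices),
  hence integrable.
*)

theory Submission
  imports Defs
begin

lemma Omega_hat_eq_box: "Omega_hat L1 = box 0 (vector [L1, 1])"
  by (auto simp: Omega_hat_def mem_box_cart forall_2)

lemma Omega_hat_cl_eq_cbox: "Omega_hat_cl L1 = cbox 0 (vector [L1, 1])"
  by (auto simp: Omega_hat_cl_def mem_box_cart forall_2)

lemma Omega_hat_subset_cl: "Omega_hat L1 \<subseteq> Omega_hat_cl L1"
  by (auto simp: Omega_hat_def Omega_hat_cl_def)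

lemma Omega_hat_cl_subset_strip: "Omega_hat_cl L1 \<subseteq> strip"
  by (auto simp: Omega_hat_cl_def strip_def)

lemma Omega_hat_lmeasurable: "Omega_hat L1 \<in> lmeasurable"
  unfolding Omega_hat_eq_box by simp

lemma first_coord_in_Sigma: "x \<in> Omega_hat L1 \<Longrightarrow> x$1 \<in> {0<..<L1}"
  by (auto simp: Omega_hat_def)

lemma set_integrable_continuous_on_Icc:
  fixes f :: "real \<Rightarrow> real"
  assumes "continuous_on {a..b} f"
  shows "set_integrable lebesgue {a<..<b} f"
  by (rule set_integrable_subset[OF absolutely_integrable_continuous_real[OF assms]]) auto

lemma set_integrable_continuous_on_Omega_hat_cl:
  fixes f :: "pt \<Rightarrow> real"
  assumes "continuous_on (Omega_hat_cl L1) f"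
  shows "set_integrable lebesgue (Omega_hat L1) f"
  using assms unfolding Omega_hat_cl_eq_cbox Omega_hat_eq_box
  by (rule set_integrable_subset[OF absolutely_integrable_continuous]) (use box_subset_cbox in auto)

section \<open>Functions bounded and continuous off a negligible set\<close>

definition bdd_continuous_off :: "'a::topological_space set \<Rightarrow> 'a set \<Rightarrow> ('a \<Rightarrow> real) \<Rightarrow> bool" where
  "bdd_continuous_off S N f \<longleftrightarrow> continuous_on (S - N) f \<and> (\<exists>B. \<forall>x\<in>S - N. \<bar>f x\<bar> \<le> B)"

lemma bdd_continuous_offI:
  "continuous_on (S - N) f \<Longrightarrow> (\<And>x. x \<in> S - N \<Longrightarrow> \<bar>f x\<bar> \<le> B) \<Longrightarrow> bdd_continuous_off S N f"
  unfolding bdd_continuous_off_def by blast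

lemma bdd_continuous_off_mono:
  "bdd_continuous_off S N f \<Longrightarrow> N \<subseteq> N' \<Longrightarrow> bdd_continuous_off S N' f"
  unfolding bdd_continuous_off_def by (meson Diff_mono continuous_on_subset order_refl subsetD)

lemma bdd_continuous_off_compact:
  "compact C \<Longrightarrow> S \<subseteq> C \<Longrightarrow> continuous_on C f \<Longrightarrow> bdd_continuous_off S N f"
  unfolding bdd_continuous_off_def
  by (metis Diff_subset bounded_pos compact_continuous_image compact_imp_bounded continuous_on_subset
      image_eqI real_norm_def subsetD)

lemma bdd_continuous_off_add:
  assumes "bdd_continuous_off S N f" "bdd_continuous_off S N g"
  shows "bdd_continuous_off S N (\<lambda>x. f x + g x)"
proof -
  obtain Bf Bg where "\<forall>x\<in>S - N. \<bar>f x\<bar> \<le> Bf" "\<forall>x\<in>S - N. \<bar>g x\<bar> \<le> Bg"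
    using assms unfolding bdd_continuous_off_def by blast
  then show ?thesis
    using assms unfolding bdd_continuous_off_def
    by (intro conjI continuous_intros exI[of _ "Bf + Bg"])
      (auto intro!: order_trans[OF abs_triangle_ineq] add_mono)
qed

lemma bdd_continuous_off_diff:
  assumes "bdd_continuous_off S N f" "bdd_continuous_off S N g"
  shows "bdd_continuous_off S N (\<lambda>x. f x - g x)"
proof -
  obtain Bf Bg where "\<forall>x\<in>S - N. \<bar>f x\<bar> \<le> Bf" "\<forall>x\<in>S - N. \<bar>g x\<bar> \<le> Bg"
    using assms unfolding bdd_continuous_off_def by blast
  then show ?thesis
    using assms unfolding bdd_continuous_off_def
    by (intro conjI continuous_intros exI[of _ "Bf + Bg"])
      (auto intro!: order_trans[OF abs_triangle_ineq4] add_mono)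
qed

lemma bdd_continuous_off_mult:
  assumes "bdd_continuous_off S N f" "bdd_continuous_off S N g"
  shows "bdd_continuous_off S N (\<lambda>x. f x * g x)"
proof -
  obtain Bf Bg where "\<forall>x\<in>S - N. \<bar>f x\<bar> \<le> Bf" "\<forall>x\<in>S - N. \<bar>g x\<bar> \<le> Bg"
    using assms unfolding bdd_continuous_off_def by blast
  then have "\<forall>x\<in>S - N. \<bar>f x * g x\<bar> \<le> \<bar>Bf\<bar> * \<bar>Bg\<bar>"
    unfolding abs_mult by (meson abs_ge_self abs_ge_zero mult_mono order_trans)
  then show ?thesis
    using assms unfolding bdd_continuous_off_def by (blast intro: continuous_intros)
qed

lemma bdd_continuous_off_compose:
  assumes f: "bdd_continuous_off S N f" and g: "continuous_on (S' - N') g" "g ` (S' - N') \<subseteq> S - N"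
  shows "bdd_continuous_off S' N' (\<lambda>x. f (g x))"
proof -
  obtain B where "continuous_on (S - N) f" "\<forall>y\<in>S - N. \<bar>f y\<bar> \<le> B"
    using f unfolding bdd_continuous_off_def by blast
  then show ?thesis
    using g unfolding bdd_continuous_off_def by (blast intro: continuous_on_compose2)
qed

lemma set_integrable_bdd_continuous_off:
  fixes f :: "'a::euclidean_space \<Rightarrow> real"
  assumes S: "S \<in> lmeasurable" and N: "negligible N" and f: "bdd_continuous_off S N f"
  shows "set_integrable lebesgue S f"
proof -
  obtain B where cont: "continuous_on (S - N) f" and bound: "\<And>x. x \<in> S - N \<Longrightarrow> \<bar>f x\<bar> \<le> B"
    using f unfolding bdd_continuous_off_def by blast
  have SN: "S - N \<in> lmeasurable"
    using S N by (intro fmeasurable_Diff) (auto intro: negligible_imp_sets)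
  have "f \<in> borel_measurable (lebesgue_on (S - N))"
    using continuous_imp_measurable_on_sets_lebesgue[OF cont] SN by (simp add: fmeasurableD)
  then have "set_integrable lebesgue (S - N) f"
    by (rule measurable_bounded_by_integrable_imp_absolutely_integrable[OF _ _ integrable_on_const[OF SN]])
      (use SN bound in \<open>auto simp: fmeasurableD\<close>)
  moreover have "negligible {x \<in> S - (S - N). f x \<noteq> 0}"
    by (rule negligible_subset[OF N]) auto
  moreover have "negligible {x \<in> (S - N) - S. f x \<noteq> 0}"
    by (rule negligible_subset[OF negligible_empty]) blast
  ultimately show ?thesis
    using absolutely_integrable_spike_set_eq by blast
qed

text \<open>Lets the pressure term be dropped from an integral without knowing that the
  remaining integrand is integrable.\<close>

lemma set_integral_diff_integral_eq_0:
  fixes f g :: "'a \<Rightarrow> real"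
  assumes "set_integrable M A g" "(LINT x:A|M. g x) = 0"
  shows "(LINT x:A|M. f x - g x) = (LINT x:A|M. f x)"
proof (cases "set_integrable M A f")
  case True
  then show ?thesis using assms by simp
next
  case False
  then have "\<not> set_integrable M A (\<lambda>x. f x - g x)"
    using set_integral_add(1)[OF _ assms(1), of "\<lambda>x. f x - g x"] by auto
  then show ?thesis using False
    unfolding set_integrable_def set_lebesgue_integral_def
    by (simp add: not_integrable_integral_eq)
qed

lemma set_integral_add_mult:
  fixes f g :: "'a \<Rightarrow> real"
  assumes "set_integrable M A f" "set_integrable M A g"
  shows "(LINT x:A|M. c * f x + d * g x) = c * (LINT x:A|M. f x) + d * (LINT x:A|M. g x)"
  using assms by (simp add: set_integral_add set_integral_mult_right)

lemma set_integral_diff_add_mult: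
  fixes f g h :: "'a \<Rightarrow> real"
  assumes "set_integrable M A f" "set_integrable M A g" "set_integrable M A h"
  shows "(LINT x:A|M. f x - g x + c * h x)
    = (LINT x:A|M. f x) - (LINT x:A|M. g x) + c * (LINT x:A|M. h x)"
  using assms by (simp add: set_integral_add set_integral_diff set_integral_mult_right)

lemma continuous_vanishes_if_set_integral_square_eq_0:
  fixes w :: "'a::euclidean_space \<Rightarrow> real"
  assumes cont: "continuous_on UNIV w" and U: "open U"
    and int: "set_integrable lebesgue U (\<lambda>x. (w x)\<^sup>2)" and zero: "(LINT x:U|lebesgue. (w x)\<^sup>2) = 0"
    and x: "x \<in> U"
  shows "w x = 0"
proof -
  have "AE y in lebesgue. indicator U y *\<^sub>R (w y)\<^sup>2 = 0"
    using integral_nonneg_eq_0_iff_AE[OF int[unfolded set_integrable_def]] zero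
    unfolding set_lebesgue_integral_def by (simp add: indicator_def)
  then have "AE y \<in> U in lebesgue. y \<in> {y. w y = 0}"
    by eventually_elim (simp add: indicator_def)
  moreover have "closed {y. w y = 0}"
    using continuous_closed_preimage_constant[OF cont closed_UNIV] by (simp add: vimage_def)
  ultimately show ?thesis
    using mem_closed_if_AE_lebesgue_open[OF U _ _ x] by blast
qed

section \<open>The discrete structure space and the discrete Laplacian\<close>

lemma Vs_h_lincomb:
  assumes e: "e \<in> Vs_h L1 T" and f: "f \<in> Vs_h L1 T"
  shows "(\<lambda>s. \<alpha> * e s + \<beta> * f s) \<in> Vs_h L1 T"
  unfolding Vs_h_def
proof (intro CollectI conjI ballI allI)
  show "continuous_on UNIV (\<lambda>s. \<alpha> * e s + \<beta> * f s)"
    using e f unfolding Vs_h_def by (auto intro!: continuous_intros)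
  show "\<alpha> * e (s + L1) + \<beta> * f (s + L1) = \<alpha> * e s + \<beta> * f s" for s
    using e f unfolding Vs_h_def by auto
  fix I assume I: "I \<in> top_cells T"
  obtain a1 b1 where 1: "\<forall>s\<in>I. e s = a1 + b1 * s" using e I unfolding Vs_h_def by blast
  obtain a2 b2 where 2: "\<forall>s\<in>I. f s = a2 + b2 * s" using f I unfolding Vs_h_def by blast
  show "\<exists>a b. \<forall>s\<in>I. \<alpha> * e s + \<beta> * f s = a + b * s"
    by (rule exI[of _ "\<alpha> * a1 + \<beta> * a2"], rule exI[of _ "\<alpha> * b1 + \<beta> * b2"])
      (simp add: 1 2 algebra_simps)
qed

lemma Vs_h_diff_quotient:
  "f \<in> Vs_h L1 T \<Longrightarrow> g \<in> Vs_h L1 T \<Longrightarrow> (\<lambda>s. (f s - g s) / tau) \<in> Vs_h L1 T"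
  using Vs_h_lincomb[of f L1 T g "1/tau" "-1/tau"] by (simp add: diff_divide_distrib)

lemma Vs_h_continuous_on: "e \<in> Vs_h L1 T \<Longrightarrow> continuous_on S e"
  by (auto simp: Vs_h_def intro: continuous_on_subset)

lemma set_integrable_Vs_h_mult:
  "e \<in> Vs_h L1 T \<Longrightarrow> f \<in> Vs_h L1 T \<Longrightarrow> set_integrable lebesgue {0<..<L1} (\<lambda>s. e s * f s)"
  by (intro set_integrable_continuous_on_Icc continuous_intros Vs_h_continuous_on)

lemma Vs_h_orthogonal_imp_zero:
  assumes w: "w \<in> Vs_h L1 T" and orth: "\<And>psi. psi \<in> Vs_h L1 T \<Longrightarrow> intS L1 (\<lambda>s. w s * psi s) = 0"
    and s: "s \<in> {0<..<L1}"
  shows "w s = 0"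
proof (rule continuous_vanishes_if_set_integral_square_eq_0[OF Vs_h_continuous_on[OF w] _ _ _ s])
  show "set_integrable lebesgue {0<..<L1} (\<lambda>s. (w s)\<^sup>2)"
    using set_integrable_Vs_h_mult[OF w w] by (simp add: power2_eq_square)
  show "(LINT s:{0<..<L1}|lebesgue. (w s)\<^sup>2) = 0"
    using orth[OF w] by (simp add: intS_def power2_eq_square)
qed simp

lemma disc_lap_Vs_h: "is_disc_lap L1 T lap \<Longrightarrow> e \<in> Vs_h L1 T \<Longrightarrow> lap e \<in> Vs_h L1 T"
  unfolding is_disc_lap_def by blast

lemma disc_lap_integral:
  "is_disc_lap L1 T lap \<Longrightarrow> e \<in> Vs_h L1 T \<Longrightarrow> psi \<in> Vs_h L1 T \<Longrightarrow>
     intS L1 (\<lambda>s. lap e s * psi s) = - intS L1 (\<lambda>s. dx e s * dx psi s)"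
  unfolding is_disc_lap_def by blast

text \<open>dx is linear on Vs_h only away from the kinks; the discrete Laplacian makes the form
  linear in its second argument exactly.\<close>

lemma intS_dx_diff_quotient:
  assumes lap: "is_disc_lap L1 T lap"
    and e: "e \<in> Vs_h L1 T" and f: "f \<in> Vs_h L1 T" and g: "g \<in> Vs_h L1 T"
  shows "intS L1 (\<lambda>s. dx e s * dx (\<lambda>s. (f s - g s) / tau) s)
       = (intS L1 (\<lambda>s. dx e s * dx f s) - intS L1 (\<lambda>s. dx e s * dx g s)) / tau"
proof -
  have le: "lap e \<in> Vs_h L1 T" by (rule disc_lap_Vs_h[OF lap e])
  have "intS L1 (\<lambda>s. dx e s * dx (\<lambda>s. (f s - g s) / tau) s)
      = - intS L1 (\<lambda>s. (lap e s * f s - lap e s * g s) / tau)"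
    using disc_lap_integral[OF lap e Vs_h_diff_quotient[OF f g]] by (simp add: right_diff_distrib)
  also have "\<dots> = (intS L1 (\<lambda>s. lap e s * g s) - intS L1 (\<lambda>s. lap e s * f s)) / tau"
    using set_integrable_Vs_h_mult[OF le f] set_integrable_Vs_h_mult[OF le g]
    by (simp add: intS_def minus_divide_left)
  finally show ?thesis
    using disc_lap_integral[OF lap e f] disc_lap_integral[OF lap e g] by (simp add: divide_simps)
qed

lemma disc_lap_diff_quotient:
  assumes lap: "is_disc_lap L1 T lap" and f: "f \<in> Vs_h L1 T" and g: "g \<in> Vs_h L1 T"
    and s: "s \<in> {0<..<L1}"
  shows "lap (\<lambda>s. (f s - g s) / tau) s = (lap f s - lap g s) / tau"
proof -
  define h where "h = (\<lambda>s. (f s - g s) / tau)"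
  have h: "h \<in> Vs_h L1 T" unfolding h_def by (rule Vs_h_diff_quotient[OF f g])
  have lh: "lap h \<in> Vs_h L1 T" and lf: "lap f \<in> Vs_h L1 T" and lg: "lap g \<in> Vs_h L1 T"
    using disc_lap_Vs_h[OF lap] h f g by blast+
  define w where "w = (\<lambda>s. 1 * lap h s + (-1) * ((lap f s - lap g s) / tau))"
  have w: "w \<in> Vs_h L1 T"
    unfolding w_def by (rule Vs_h_lincomb[OF lh Vs_h_diff_quotient[OF lf lg]])
  have "intS L1 (\<lambda>s. w s * psi s) = 0" if psi: "psi \<in> Vs_h L1 T" for psi
  proof -
    have "intS L1 (\<lambda>s. w s * psi s)
        = intS L1 (\<lambda>s. lap h s * psi s)
          - (intS L1 (\<lambda>s. lap f s * psi s) - intS L1 (\<lambda>s. lap g s * psi s)) / tau"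
      using set_integrable_Vs_h_mult[OF lh psi] set_integrable_Vs_h_mult[OF lf psi]
        set_integrable_Vs_h_mult[OF lg psi]
      by (simp add: intS_def w_def algebra_simps diff_divide_distrib)
    also have "\<dots> = 0"
    proof -
      have comm: "intS L1 (\<lambda>s. dx psi s * dx b s) = intS L1 (\<lambda>s. dx b s * dx psi s)" for b
        by (simp add: mult.commute)
      have "intS L1 (\<lambda>s. dx h s * dx psi s)
          = (intS L1 (\<lambda>s. dx f s * dx psi s) - intS L1 (\<lambda>s. dx g s * dx psi s)) / tau"
        using intS_dx_diff_quotient[OF lap psi f g, of tau] unfolding h_def[symmetric] comm .
      then show ?thesis
        unfolding disc_lap_integral[OF lap h psi] disc_lap_integral[OF lap f psi]
          disc_lap_integral[OF lap g psi]
        by (simp add: diff_divide_distrib)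
    qed
    finally show ?thesis .
  qed
  then have "w s = 0" using Vs_h_orthogonal_imp_zero[OF w _ s] by blast
  then show ?thesis by (simp add: w_def h_def diff_divide_distrib)
qed

lemma periodic_triangulation_finite: "periodic_triangulation L1 T \<Longrightarrow> finite T"
  unfolding periodic_triangulation_def by (elim conjE)

lemma periodic_triangulation_triangle:
  "periodic_triangulation L1 T \<Longrightarrow> K \<in> T \<Longrightarrow> card K = 3 \<and> \<not> collinear K"
  unfolding periodic_triangulation_def by (elim conjE) blast

lemma periodic_triangulation_finite_triangle:
  "periodic_triangulation L1 T \<Longrightarrow> K \<in> T \<Longrightarrow> finite K"
  using periodic_triangulation_triangle card.infinite by fastforce

lemma periodic_triangulation_cover:
  "periodic_triangulation L1 T \<Longrightarrow> \<Union> ((\<lambda>K. convex hull K) ` T) = Omega_hat_cl L1"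
  unfolding periodic_triangulation_def by (elim conjE)

lemma periodic_triangulation_finite_vertices:
  "periodic_triangulation L1 T \<Longrightarrow> finite (\<Union>T)"
  using periodic_triangulation_finite periodic_triangulation_finite_triangle by blast

lemma finite_top_cells: "periodic_triangulation L1 T \<Longrightarrow> finite (top_cells T)"
proof -
  assume tri: "periodic_triangulation L1 T"
  have "top_cells T \<subseteq> (\<lambda>(a, b). closed_segment (a$1) (b$1)) ` (\<Union>T \<times> \<Union>T)"
    unfolding top_cells_def by fastforce
  then show ?thesis using periodic_triangulation_finite_vertices[OF tri] finite_subset by blast
qed

lemma mem_convex_hull_supporting_hyperplane:
  fixes K :: "'a::euclidean_space set"
  assumes K: "finite K" and le: "\<And>v. v \<in> K \<Longrightarrow> a \<bullet> v \<le> b"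
    and x: "x \<in> convex hull K" "a \<bullet> x = b"
  shows "x \<in> convex hull {v \<in> K. a \<bullet> v = b}"
proof -
  have "convex hull K \<subseteq> {y. a \<bullet> y \<le> b}"
    using le by (intro hull_minimal) (auto simp: convex_halfspace_le)
  then have "(convex hull K \<inter> {y. a \<bullet> y = b}) face_of convex hull K"
    by (intro face_of_Int_supporting_hyperplane_le) auto
  then obtain K' where K': "K' \<subseteq> K" "convex hull K \<inter> {y. a \<bullet> y = b} = convex hull K'"
    using face_of_convex_hull_subset finite_imp_compact[OF K] by metis
  have "K' \<subseteq> {v \<in> K. a \<bullet> v = b}"
    using K' hull_subset[of K' convex] by blast
  then show ?thesis
    using x K'(2) hull_mono by blast
qed

text \<open>The point (s,1) lies in some triangle, hence in the convex hull of that triangle's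
  vertices on the top boundary.\<close>

lemma top_cells_cover:
  assumes tri: "periodic_triangulation L1 T" and s: "s \<in> {0..L1}"
  shows "s \<in> (\<lambda>v. v$1) ` \<Union>T \<or> (\<exists>I\<in>top_cells T. s \<in> interior I)"
proof -
  let ?x = "vector [s, 1] :: pt"
  let ?e2 = "axis 2 1 :: pt"
  have "?x \<in> \<Union> ((\<lambda>K. convex hull K) ` T)"
    using s by (simp add: periodic_triangulation_cover[OF tri] Omega_hat_cl_def)
  then obtain K where K: "K \<in> T" "?x \<in> convex hull K" by blast
  have fin: "finite K" by (rule periodic_triangulation_finite_triangle[OF tri K(1)])
  have below: "?e2 \<bullet> v \<le> 1" if "v \<in> K" for v
  proof -
    have "v \<in> \<Union> ((\<lambda>K. convex hull K) ` T)"
      using K(1) hull_inc[OF that] by blast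
    then show ?thesis by (simp add: periodic_triangulation_cover[OF tri] Omega_hat_cl_def inner_axis')
  qed
  then have "?x \<in> convex hull {v \<in> K. ?e2 \<bullet> v = 1}"
    using mem_convex_hull_supporting_hyperplane[OF fin below K(2)] by (simp add: inner_axis')
  then have "(\<lambda>v. v$1) ?x \<in> (\<lambda>v. v$1) ` (convex hull {v \<in> K. ?e2 \<bullet> v = 1})"
    by (rule imageI)
  then have "(\<lambda>v. v$1) ?x \<in> convex hull ((\<lambda>v. v$1) ` {v \<in> K. ?e2 \<bullet> v = 1})"
    by (simp only: convex_hull_linear_image[OF bounded_linear.linear[OF bounded_linear_vec_nth]])
  moreover define A where "A = (\<lambda>v::pt. v$1) ` {v \<in> K. ?e2 \<bullet> v = 1}"
  ultimately have sA: "s \<in> convex hull A" by simp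
  have finA: "finite A" using fin by (simp add: A_def)
  have "A \<noteq> {}" using sA by auto
  then have "convex hull A \<subseteq> {Min A..Max A}"
    using finA by (intro hull_minimal) auto
  then have between: "Min A \<le> s" "s \<le> Max A" using sA by auto
  obtain a where a: "a \<in> K" "a$2 = 1" "a$1 = Min A"
    using Min_in[OF finA \<open>A \<noteq> {}\<close>] by (auto simp: A_def inner_axis')
  obtain b where b: "b \<in> K" "b$2 = 1" "b$1 = Max A"
    using Max_in[OF finA \<open>A \<noteq> {}\<close>] by (auto simp: A_def inner_axis')
  show ?thesis
  proof (cases "s = Min A \<or> s = Max A")
    case True
    then show ?thesis using a b K(1) by (metis UnionI image_eqI)
  next
    case False
    then have "a$1 < s" "s < b$1" using between a b by auto
    moreover have "closed_segment (a$1) (b$1) \<in> top_cells T"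
      unfolding top_cells_def using K(1) a b calculation by fastforce
    ultimately show ?thesis by (force simp: closed_segment_eq_real_ivl)
  qed
qed

lemma dx_Vs_h_constant_on_top_cell:
  assumes e: "e \<in> Vs_h L1 T" and I: "I \<in> top_cells T"
  obtains b where "\<And>t. t \<in> interior I \<Longrightarrow> dx e t = b"
proof -
  obtain a b where ab: "\<forall>s\<in>I. e s = a + b * s" using e I unfolding Vs_h_def by blast
  have "dx e t = b" if t: "t \<in> interior I" for t
  proof -
    have "(e has_real_derivative b) (at t)"
      by (rule has_field_derivative_transform_within_open[of "\<lambda>s. a + b * s" b t "interior I"])
        (use ab t in \<open>auto intro!: derivative_eq_intros dest: subsetD[OF interior_subset]\<close>)
    then show ?thesis
      unfolding dx_def using DERIV_imp_deriv real_differentiable_def by auto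
  qed
  then show ?thesis using that by blast
qed

lemma dx_Vs_h_continuous_off_vertices:
  assumes tri: "periodic_triangulation L1 T" and e: "e \<in> Vs_h L1 T"
  shows "continuous_on ({0<..<L1} - (\<lambda>v. v$1) ` \<Union>T) (dx e)"
proof -
  have "open ({0<..<L1} - (\<lambda>v::pt. v$1) ` \<Union>T)"
    using periodic_triangulation_finite_vertices[OF tri] by (simp add: open_Diff finite_imp_closed)
  moreover have "isCont (dx e) s" if s: "s \<in> {0<..<L1} - (\<lambda>v. v$1) ` \<Union>T" for s
  proof -
    obtain I where I: "I \<in> top_cells T" "s \<in> interior I"
      using top_cells_cover[OF tri, of s] s by force
    obtain b where b: "\<And>t. t \<in> interior I \<Longrightarrow> dx e t = b"
      using dx_Vs_h_constant_on_top_cell[OF e I(1)] by blast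
    have "\<forall>\<^sub>F t in at s. dx e t = dx e s"
      unfolding eventually_at_topological using I b by (intro exI[of _ "interior I"]) auto
    then show ?thesis unfolding continuous_at by (rule tendsto_eventually)
  qed
  ultimately show ?thesis by (simp add: continuous_on_eq_continuous_at)
qed

lemma dx_Vs_h_bounded:
  assumes tri: "periodic_triangulation L1 T" and e: "e \<in> Vs_h L1 T"
  obtains B where "\<And>s. s \<in> {0<..<L1} \<Longrightarrow> \<bar>dx e s\<bar> \<le> B"
proof -
  have "\<forall>I\<in>top_cells T. \<exists>b. \<forall>t\<in>interior I. dx e t = b"
    using dx_Vs_h_constant_on_top_cell[OF e] by metis
  then obtain b where b: "\<And>I t. I \<in> top_cells T \<Longrightarrow> t \<in> interior I \<Longrightarrow> dx e t = b I"
    by metis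
  have "dx e s \<in> dx e ` ((\<lambda>v. v$1) ` \<Union>T) \<union> b ` top_cells T" if s: "s \<in> {0<..<L1}" for s
  proof -
    consider "s \<in> (\<lambda>v. v$1) ` \<Union>T" | I where "I \<in> top_cells T" "s \<in> interior I"
      using top_cells_cover[OF tri, of s] s by auto
    then show ?thesis by cases (auto simp: b)
  qed
  then have "dx e ` {0<..<L1} \<subseteq> dx e ` ((\<lambda>v. v$1) ` \<Union>T) \<union> b ` top_cells T"
    by blast
  then have "finite (dx e ` {0<..<L1})"
    using periodic_triangulation_finite_vertices[OF tri] finite_top_cells[OF tri]
      finite_subset by blast
  then obtain B where "\<forall>y\<in>dx e ` {0<..<L1}. \<bar>y\<bar> \<le> B"
    using finite_imp_bounded bounded_real by blast
  then show ?thesis using that by blast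
qed

lemma bdd_continuous_off_dx_Vs_h:
  assumes tri: "periodic_triangulation L1 T" and e: "e \<in> Vs_h L1 T"
  shows "bdd_continuous_off {0<..<L1} ((\<lambda>v. v$1) ` \<Union>T) (dx e)"
proof -
  obtain B where "\<And>s. s \<in> {0<..<L1} \<Longrightarrow> \<bar>dx e s\<bar> \<le> B"
    using dx_Vs_h_bounded[OF tri e] by blast
  then show ?thesis
    using dx_Vs_h_continuous_off_vertices[OF tri e] by (blast intro: bdd_continuous_offI)
qed

lemma negligible_vertex_abscissae: "periodic_triangulation L1 T \<Longrightarrow> negligible ((\<lambda>v::pt. v$1) ` \<Union>T)"
  using periodic_triangulation_finite_vertices by (intro negligible_finite) simp

lemma set_integrable_dx_mult:
  assumes tri: "periodic_triangulation L1 T" and e: "e \<in> Vs_h L1 T" and f: "f \<in> Vs_h L1 T"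
  shows "set_integrable lebesgue {0<..<L1} (\<lambda>s. dx e s * dx f s)"
  by (intro set_integrable_bdd_continuous_off[OF _ negligible_vertex_abscissae[OF tri]]
      bdd_continuous_off_mult bdd_continuous_off_dx_Vs_h tri e f) (simp add: lmeasurable_open)

section \<open>Barycentric coordinates and bubble functions\<close>

lemma det2_neq_0_if_not_collinear:
  fixes v1 v2 v3 :: pt
  assumes nc: "\<not> collinear {v1, v2, v3}"
  shows "(v2 - v1)$1 * (v3 - v1)$2 - (v2 - v1)$2 * (v3 - v1)$1 \<noteq> 0"
proof
  define p r where "p = v2 - v1" and "r = v3 - v1"
  assume "(v2 - v1)$1 * (v3 - v1)$2 - (v2 - v1)$2 * (v3 - v1)$1 = 0"
  then have D: "p$1 * r$2 = p$2 * r$1" by (simp add: p_def r_def)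
  have "p = 0 \<or> (\<exists>c. r = c *\<^sub>R p)"
  proof (cases "p$1 = 0")
    case False
    then have "r = (r$1 / p$1) *\<^sub>R p"
      using D by (simp add: vec_eq_iff forall_2 field_simps)
    then show ?thesis by blast
  next
    case p1: True
    show ?thesis
    proof (cases "p$2 = 0")
      case True
      then show ?thesis using p1 by (simp add: vec_eq_iff forall_2)
    next
      case False
      then have "r = (r$2 / p$2) *\<^sub>R p"
        using D p1 by (simp add: vec_eq_iff forall_2)
      then show ?thesis by blast
    qed
  qed
  then have "collinear {0, p, r}" by (auto simp: collinear_lemma)
  then have "collinear {0, v2 - v1, v3 - v1}" by (simp only: p_def r_def)
  then have "collinear {v2, v1, v3}" using collinear_3[of v2 v1 v3] by simp
  then show False using nc by (simp add: insert_commute)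
qed

lemma cramer_2x2:
  fixes D p1 p2 r1 r2 y1 y2 :: real
  assumes D: "D = p1 * r2 - p2 * r1" and D0: "D \<noteq> 0"
  shows "(y1 * r2 - y2 * r1) * p1 / D + (p1 * y2 - p2 * y1) * r1 / D = y1"
    and "(y1 * r2 - y2 * r1) * p2 / D + (p1 * y2 - p2 * y1) * r2 / D = y2"
proof -
  have "(y1 * r2 - y2 * r1) * p1 + (p1 * y2 - p2 * y1) * r1 = y1 * D"
    and "(y1 * r2 - y2 * r1) * p2 + (p1 * y2 - p2 * y1) * r2 = y2 * D"
    unfolding D by (simp_all add: algebra_simps)
  then show "(y1 * r2 - y2 * r1) * p1 / D + (p1 * y2 - p2 * y1) * r1 / D = y1"
    and "(y1 * r2 - y2 * r1) * p2 / D + (p1 * y2 - p2 * y1) * r2 / D = y2"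
    using D0 by (simp_all add: field_simps)
qed

text \<open>The coordinates come from Cramer's rule for the edge vectors issuing from the first
  vertex.\<close>

lemma bary_triangle_affine:
  assumes card: "card K = 3" and nc: "\<not> collinear K"
  obtains \<alpha> :: "pt \<Rightarrow> real" and \<beta> :: "pt \<Rightarrow> pt" where "\<And>x v. v \<in> K \<Longrightarrow> bary K x v = \<alpha> v + \<beta> v \<bullet> x"
proof -
  obtain v1 v2 v3 where K: "K = {v1, v2, v3}" and d: "v1 \<noteq> v2" "v2 \<noteq> v3" "v1 \<noteq> v3"
    using card card_3_iff by metis
  define p r where "p = v2 - v1" and "r = v3 - v1"
  define D where "D = p$1 * r$2 - p$2 * r$1"
  have D0: "D \<noteq> 0"
    using det2_neq_0_if_not_collinear nc unfolding K D_def p_def r_def by blast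
  define n2 n3 :: pt where "n2 = (1 / D) *\<^sub>R vector [r$2, - r$1]"
    and "n3 = (1 / D) *\<^sub>R vector [- p$2, p$1]"
  define \<beta> where "\<beta> v = (if v = v2 then n2 else if v = v3 then n3 else - n2 - n3)" for v
  define \<alpha> where "\<alpha> v = (if v = v1 then 1 else 0) - \<beta> v \<bullet> v1" for v
  define L where "L x v = (if v \<in> K then \<alpha> v + \<beta> v \<bullet> x else 0)" for x v
  have sumK: "sum f K = f v1 + f v2 + f v3" for f :: "pt \<Rightarrow> 'b::comm_monoid_add"
    using d unfolding K by (simp add: add.assoc)
  have L: "L x v1 = 1 - n2 \<bullet> (x - v1) - n3 \<bullet> (x - v1)"
    "L x v2 = n2 \<bullet> (x - v1)" "L x v3 = n3 \<bullet> (x - v1)" for x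
    using d by (simp_all add: L_def K \<alpha>_def \<beta>_def inner_diff_right inner_diff_left)
  have comb: "(\<Sum>v\<in>K. l v *\<^sub>R v) = v1 + l v2 *\<^sub>R p + l v3 *\<^sub>R r" if "sum l K = 1" for l
  proof -
    have "l v1 + l v2 + l v3 = 1" using that sumK[of l] by simp
    then have "l v1 *\<^sub>R v1 + l v2 *\<^sub>R v2 + l v3 *\<^sub>R v3 = v1 + l v2 *\<^sub>R p + l v3 *\<^sub>R r"
      unfolding p_def r_def by (simp add: algebra_simps flip: scaleR_add_left)
    then show ?thesis unfolding sumK .
  qed
  have n: "n2 \<bullet> y = (y$1 * r$2 - y$2 * r$1) / D" "n3 \<bullet> y = (p$1 * y$2 - p$2 * y$1) / D" for y
    by (simp_all add: n2_def n3_def inner_vec_def sum_2 field_simps, simp_all add: diff_divide_distrib)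
  have cramer_solution: "(n2 \<bullet> y) *\<^sub>R p + (n3 \<bullet> y) *\<^sub>R r = y" for y
    by (simp add: n vec_eq_iff forall_2 cramer_2x2[OF D_def D0])
  have cramer_unique: "l2 = n2 \<bullet> y \<and> l3 = n3 \<bullet> y" if "l2 *\<^sub>R p + l3 *\<^sub>R r = y" for l2 l3 y
  proof -
    have "y$1 = l2 * p$1 + l3 * r$1" "y$2 = l2 * p$2 + l3 * r$2"
      using that by (auto simp: vec_eq_iff forall_2)
    then have "l2 * D = y$1 * r$2 - y$2 * r$1" "l3 * D = p$1 * y$2 - p$2 * y$1"
      unfolding D_def by (simp_all add: algebra_simps)
    then show ?thesis using D0 by (simp add: n field_simps)
  qed
  have "bary K x = L x" for x
    unfolding bary_def
  proof (rule the_equality)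
    have sL: "sum (L x) K = 1" unfolding sumK L by simp
    show "(\<forall>v. v \<notin> K \<longrightarrow> L x v = 0) \<and> sum (L x) K = 1 \<and> (\<Sum>v\<in>K. L x v *\<^sub>R v) = x"
    proof (intro conjI allI impI sL)
      show "L x v = 0" if "v \<notin> K" for v using that by (simp add: L_def)
      show "(\<Sum>v\<in>K. L x v *\<^sub>R v) = x"
        using cramer_solution[of "x - v1"] by (simp add: comb[OF sL] L algebra_simps)
    qed
  next
    fix l assume l: "(\<forall>v. v \<notin> K \<longrightarrow> l v = 0) \<and> sum l K = 1 \<and> (\<Sum>v\<in>K. l v *\<^sub>R v) = x"
    then have "x = v1 + l v2 *\<^sub>R p + l v3 *\<^sub>R r" using comb[of l] by simp
    then have "l v2 *\<^sub>R p + l v3 *\<^sub>R r = x - v1" by simp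
    then have "l v2 = L x v2" "l v3 = L x v3"
      using cramer_unique[of "l v2" "l v3" "x - v1"] by (simp_all add: L)
    moreover have "l v1 = L x v1" using l sumK[of l] calculation by (simp add: L)
    ultimately show "l = L x" using l by (auto simp: K L_def)
  qed
  then show ?thesis using that[of \<alpha> \<beta>] by (simp add: L_def)
qed

lemma bubble_triangle_prod_affine:
  assumes "card K = 3" "\<not> collinear K"
  obtains \<alpha> :: "pt \<Rightarrow> real" and \<beta> :: "pt \<Rightarrow> pt" where "\<And>x. bubble K x = (\<Prod>v\<in>K. \<alpha> v + \<beta> v \<bullet> x)"
proof -
  obtain \<alpha> \<beta> where "\<And>x v. v \<in> K \<Longrightarrow> bary K x v = \<alpha> v + \<beta> v \<bullet> x"
    using bary_triangle_affine[OF assms] by blast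
  then show ?thesis using that[of \<alpha> \<beta>] by (simp add: bubble_def)
qed

section \<open>Gradients of MINI velocity fields\<close>

lemma sum_scaleR_axis_nth: "(\<Sum>i\<in>UNIV. f i *\<^sub>R axis i (1::real)) $ j = f j"
  by (simp add: axis_def if_distrib sum.delta' cong: if_cong)

lemma grad_eq_matrix_derivative:
  assumes "open U" "x \<in> U" "\<And>y. y \<in> U \<Longrightarrow> G y = u y" and "(G has_derivative G') (at x)"
  shows "grad u x = matrix G'"
proof -
  have "(u has_derivative G') (at x)"
    by (rule has_derivative_transform_within_open[OF assms(4,1,2,3)])
  then show ?thesis
    unfolding grad_def using frechet_derivative_at differentiableI by metis
qed

lemma grad_Vf_h_on_triangle:
  assumes tri: "periodic_triangulation L1 T" and u: "u \<in> Vf_h L1 T" and K: "K \<in> T"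
  obtains P :: "2 \<Rightarrow> 2 \<Rightarrow> pt \<Rightarrow> real"
  where "\<And>i j. continuous_on UNIV (P i j)"
    and "\<And>x i j. x \<in> interior (convex hull K) \<Longrightarrow> grad u x $ i $ j = P i j x"
proof -
  obtain \<alpha> \<beta> where bubble: "\<And>x. bubble K x = (\<Prod>v\<in>K. \<alpha> v + \<beta> v \<bullet> x)"
    using bubble_triangle_prod_affine periodic_triangulation_triangle[OF tri K] by metis
  have "\<forall>i. \<exists>a b c. \<forall>x\<in>convex hull K. u x $ i = a + b \<bullet> x + c * bubble K x"
    using u K unfolding Vf_h_def P1_bubble_on_def by blast
  then obtain a b c
    where abc: "\<And>i x. x \<in> convex hull K \<Longrightarrow> u x $ i = a i + b i \<bullet> x + c i * bubble K x"
    by metis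
  define g where "g i y = a i + b i \<bullet> y + c i * (\<Prod>v\<in>K. \<alpha> v + \<beta> v \<bullet> y)" for i y
  define g' where "g' i y h = b i \<bullet> h + c i * (\<Sum>v\<in>K. \<beta> v \<bullet> h * (\<Prod>w\<in>K - {v}. \<alpha> w + \<beta> w \<bullet> y))"
    for i y h
  define G where "G y = (\<Sum>i\<in>UNIV. g i y *\<^sub>R axis i (1::real))" for y
  define G' where "G' y h = (\<Sum>i\<in>UNIV. g' i y h *\<^sub>R axis i (1::real))" for y h
  have G': "(G has_derivative G' y) (at y)" for y
    unfolding G_def G'_def g_def g'_def by (auto intro!: derivative_eq_intros)
  have uG: "G y = u y" if "y \<in> convex hull K" for y
    unfolding vec_eq_iff G_def sum_scaleR_axis_nth g_def using abc[OF that] by (simp add: bubble)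
  have "grad u x $ i $ j = g' i x (axis j 1)" if x: "x \<in> interior (convex hull K)" for x i j
  proof -
    have "grad u x = matrix (G' x)"
      by (rule grad_eq_matrix_derivative[OF open_interior x _ G'])
        (simp add: uG interior_subset[THEN subsetD])
    then show ?thesis unfolding matrix_def G'_def sum_scaleR_axis_nth by simp
  qed
  moreover have "continuous_on UNIV (\<lambda>y. g' i y (axis j 1))" for i j
    unfolding g'_def by (intro continuous_intros)
  ultimately show ?thesis using that[of "\<lambda>i j y. g' i y (axis j 1)"] by blast
qed

lemma interior_triangle_cover:
  assumes tri: "periodic_triangulation L1 T"
    and x: "x \<in> Omega_hat_cl L1" "x \<notin> (\<Union>K\<in>T. frontier (convex hull K))"
  obtains K where "K \<in> T" "x \<in> interior (convex hull K)"
proof -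
  obtain K where K: "K \<in> T" "x \<in> convex hull K"
    using x(1) periodic_triangulation_cover[OF tri] by blast
  have "closed (convex hull K)"
    using periodic_triangulation_finite_triangle[OF tri K(1)]
    by (intro compact_imp_closed finite_imp_compact_convex_hull)
  then show thesis
    using that K x(2) by (auto simp: frontier_def)
qed

lemma bdd_continuous_off_grad_Vf_h:
  assumes tri: "periodic_triangulation L1 T" and u: "u \<in> Vf_h L1 T"
  shows "bdd_continuous_off (Omega_hat L1) (\<Union>K\<in>T. frontier (convex hull K)) (\<lambda>x. grad u x $ i $ j)"
proof -
  define N where "N = (\<Union>K\<in>T. frontier (convex hull K))"
  have "\<forall>K\<in>T. \<exists>p. continuous_on UNIV p \<and> (\<forall>x\<in>interior (convex hull K). grad u x $ i $ j = p x)"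
    using grad_Vf_h_on_triangle[OF tri u] by metis
  then obtain p where p: "\<And>K. K \<in> T \<Longrightarrow> continuous_on UNIV (p K)"
    "\<And>K x. K \<in> T \<Longrightarrow> x \<in> interior (convex hull K) \<Longrightarrow> grad u x $ i $ j = p K x"
    by metis
  have cover: "\<exists>K\<in>T. x \<in> interior (convex hull K)" if x: "x \<in> Omega_hat L1 - N" for x
  proof -
    have "x \<in> Omega_hat_cl L1" "x \<notin> (\<Union>K\<in>T. frontier (convex hull K))"
      using x Omega_hat_subset_cl by (auto simp: N_def)
    then obtain K where "K \<in> T" "x \<in> interior (convex hull K)"
      by (rule interior_triangle_cover[OF tri])
    then show ?thesis by blast
  qed
  have cont: "isCont (\<lambda>x. grad u x $ i $ j) x" if x: "x \<in> Omega_hat L1 - N" for x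
  proof -
    obtain K where K: "K \<in> T" "x \<in> interior (convex hull K)" using cover[OF x] by blast
    have "isCont (p K) x" using p(1)[OF K(1)] by (simp add: continuous_on_eq_continuous_at)
    moreover have "\<forall>\<^sub>F y in at x. p K y = grad u y $ i $ j"
      unfolding eventually_at_topological using K p(2)
        by (intro exI[of _ "interior (convex hull K)"]) auto
    ultimately show ?thesis
      unfolding continuous_at using Lim_transform_eventually p(2)[OF K] by fastforce
  qed
  have bounded: "bounded (p K ` (convex hull K))" if K: "K \<in> T" for K
  proof (rule compact_imp_bounded, rule compact_continuous_image)
    show "continuous_on (convex hull K) (p K)" using p(1)[OF K] by (rule continuous_on_subset) simp
    show "compact (convex hull K)"
      by (rule finite_imp_compact_convex_hull[OF periodic_triangulation_finite_triangle[OF tri K]])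
  qed
  have "continuous_on (Omega_hat L1 - N) (\<lambda>x. grad u x $ i $ j)"
    using cont by (simp add: continuous_at_imp_continuous_on)
  moreover have "(\<lambda>x. grad u x $ i $ j) ` (Omega_hat L1 - N) \<subseteq> (\<Union>K\<in>T. p K ` (convex hull K))"
    using cover p(2) interior_subset by fastforce
  moreover have "bounded (\<Union>K\<in>T. p K ` (convex hull K))"
    using periodic_triangulation_finite[OF tri] bounded by blast
  ultimately show ?thesis
    unfolding N_def bdd_continuous_off_def bounded_real by (meson image_subset_iff)
qed

lemma negligible_vertical_lines:
  fixes F :: "real set"
  assumes "finite F"
  shows "negligible {x::pt. x$1 \<in> F}"
proof -
  have "{x::pt. x$1 \<in> F} = (\<Union>c\<in>F. {x. axis 1 1 \<bullet> x = c})"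
    by (auto simp: inner_axis')
  moreover have "negligible {x::pt. axis 1 1 \<bullet> x = c}" for c
    by (rule negligible_hyperplane) (simp add: axis_eq_0_iff)
  ultimately show ?thesis using assms by auto
qed

lemma frob_grad_MM:
  "frob (grad u x) (MM e x)
     = grad u x $ 1 $ 1 * e (x$1) - grad u x $ 1 $ 2 * (x$2 * dx e (x$1)) + grad u x $ 2 $ 2"
  by (simp add: frob_def sum_2 MM_def mat2_def)

lemma set_integrable_incompressibility_term:
  assumes tri: "periodic_triangulation L1 T"
    and q: "q \<in> Qf_h L1 T" and u: "u \<in> Vf_h L1 T" and e: "e \<in> Vs_h L1 T"
  shows "set_integrable lebesgue (Omega_hat L1) (\<lambda>x. q x * frob (grad u x) (MM e x))"
proof -
  define F where "F = (\<lambda>v::pt. v$1) ` \<Union>T"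
  define N where "N = (\<Union>K\<in>T. frontier (convex hull K)) \<union> {x. x$1 \<in> F}"
  have negN: "negligible N"
    unfolding N_def F_def
    using periodic_triangulation_finite[OF tri] periodic_triangulation_finite_vertices[OF tri]
    by (intro negligible_Un negligible_vertical_lines negligible_Union)
      (auto intro: negligible_convex_frontier)
  have on_cl: "bdd_continuous_off (Omega_hat L1) N f" if "continuous_on (Omega_hat_cl L1) f" for f
    using that Omega_hat_subset_cl
    by (intro bdd_continuous_off_compact[of "Omega_hat_cl L1"]) (simp_all add: Omega_hat_cl_eq_cbox)
  have grad: "bdd_continuous_off (Omega_hat L1) N (\<lambda>x. grad u x $ i $ j)" for i j
    by (rule bdd_continuous_off_mono[OF bdd_continuous_off_grad_Vf_h[OF tri u]]) (auto simp: N_def)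
  have dx: "bdd_continuous_off (Omega_hat L1) N (\<lambda>x. dx e (x$1))"
    by (rule bdd_continuous_off_compose[OF bdd_continuous_off_dx_Vs_h[OF tri e]])
      (auto intro: continuous_intros simp: N_def F_def Omega_hat_def)
  have "continuous_on (Omega_hat_cl L1) q"
    using q Omega_hat_cl_subset_strip by (auto simp: Qf_h_def intro: continuous_on_subset)
  moreover have "continuous_on (Omega_hat_cl L1) (\<lambda>x. e (x$1))"
    "continuous_on (Omega_hat_cl L1) (\<lambda>x::pt. x$2)"
    using Vs_h_continuous_on[OF e] by (auto intro!: continuous_intros intro: continuous_on_compose2)
  ultimately have "bdd_continuous_off (Omega_hat L1) N (\<lambda>x. q x * frob (grad u x) (MM e x))"
    unfolding frob_grad_MM
    by (intro bdd_continuous_off_mult bdd_continuous_off_add bdd_continuous_off_diff on_cl grad dx)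
  then show ?thesis
    by (rule set_integrable_bdd_continuous_off[OF Omega_hat_lmeasurable negN])
qed

lemma mat2_nth [simp]:
  "mat2 a b c d $ 1 $ 1 = a" "mat2 a b c d $ 1 $ 2 = b"
    "mat2 a b c d $ 2 $ 1 = c" "mat2 a b c d $ 2 $ 2 = d"
  by (simp_all add: mat2_def)

lemma mat2_eta: "(A::real^2^2) = mat2 (A$1$1) (A$1$2) (A$2$1) (A$2$2)"
  by (simp add: vec_eq_iff forall_2)

lemma mat2_mult:
  "mat2 a b c d ** mat2 a' b' c' d' = mat2 (a*a' + b*c') (a*b' + b*d') (c*a' + d*c') (c*b' + d*d')"
  by (simp add: vec_eq_iff forall_2 matrix_matrix_mult_def sum_2)

lemma mat2_one: "(mat 1 :: real^2^2) = mat2 1 0 0 1"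
  by (simp add: vec_eq_iff forall_2 mat_def)

lemma mat2_scaleR: "(r::real) *\<^sub>R mat2 a b c d = mat2 (r*a) (r*b) (r*c) (r*d)"
  by (simp add: vec_eq_iff forall_2)

lemma mat2_diff: "mat2 a b c d - mat2 a' b' c' d' = mat2 (a - a') (b - b') (c - c') (d - d')"
  by (simp add: vec_eq_iff forall_2)

lemma symm_mat2: "symm (mat2 a b c d) = mat2 a ((b + c) / 2) ((c + b) / 2) d"
  by (simp add: vec_eq_iff forall_2 symm_def transpose_def field_simps)

lemma frob_mat2: "frob (mat2 a b c d) (mat2 a' b' c' d') = a*a' + b*b' + c*c' + d*d'"
  by (simp add: frob_def sum_2)

lemma matrix_inv_lower_triangular:
  assumes "(e::real) \<noteq> 0"
  shows "matrix_inv (mat2 1 0 c e) = mat2 1 0 (- c / e) (1 / e)"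
proof -
  let ?F = "mat2 1 0 c e" and ?E = "mat2 1 0 (- c / e) (1 / e)"
  have inv: "?F ** ?E = mat 1" "?E ** ?F = mat 1"
    using assms by (simp_all add: mat2_mult mat2_one field_simps)
  then have "\<exists>A'. ?F ** A' = mat 1 \<and> A' ** ?F = mat 1" by blast
  then have "?F ** matrix_inv ?F = mat 1"
    unfolding matrix_inv_def by (rule someI_ex[THEN conjunct1])
  then have "?E ** (?F ** matrix_inv ?F) = ?E" by (simp only: matrix_mul_rid)
  then show ?thesis by (simp only: matrix_mul_assoc inv(2) matrix_mul_lid)
qed

text \<open>Since MM e = e (FF e)^(-T), the pressure part of the stress tested against the velocity
  is exactly the incompressibility integrand, and the symmetric part of a matrix is what
  survives pairing with its symmetric part.\<close>

lemma stress_power_pointwise: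
  assumes pos: "e (x$1) > 0"
  shows "frob ((2 * mu) *\<^sub>R symm (grad u x ** matrix_inv (FF e x)) - q *\<^sub>R mat 1)
              (grad u x ** matrix_inv (FF e x)) * e (x$1)
       = 2 * mu * (e (x$1) * frob (symm (grad u x ** matrix_inv (FF e x)))
                                  (symm (grad u x ** matrix_inv (FF e x))))
         - q * frob (grad u x) (MM e x)"
proof -
  obtain a b c d where D: "grad u x = mat2 a b c d" using mat2_eta by blast
  have Fi: "matrix_inv (FF e x) = mat2 1 0 (- (x$2 * dx e (x$1)) / e (x$1)) (1 / e (x$1))"
    unfolding FF_def by (rule matrix_inv_lower_triangular) (use pos in simp)
  show ?thesis
    unfolding Fi D MM_def mat2_mult mat2_one mat2_scaleR mat2_diff symm_mat2 frob_mat2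
    using pos by (simp add: field_simps)
qed

lemma backward_difference_identity:
  fixes a b tau :: real
  assumes "tau \<noteq> 0"
  shows "2 * tau * ((a - b) / tau * a) = a\<^sup>2 - b\<^sup>2 + tau * tau * ((a - b) / tau)\<^sup>2"
  using assms by (simp add: field_simps power2_eq_square)

lemma weighted_backward_difference_identity:
  fixes A B :: "'a::real_inner" and tau b c :: real
  assumes "tau \<noteq> 0"
  shows "2 * tau * (inner ((1 / tau) *\<^sub>R (A - B)) A * b)
    + tau * ((b - c) / tau * inner (2 *\<^sub>R B - A) A)
     = b * (norm A)\<^sup>2 - c * (norm B)\<^sup>2 + tau * tau * (c * (norm ((1 / tau) *\<^sub>R (A - B)))\<^sup>2)"
proof -
  have "(norm ((1 / tau) *\<^sub>R (A - B)))\<^sup>2 = inner ((1 / tau) *\<^sub>R (A - B)) ((1 / tau) *\<^sub>R (A - B))"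
    by (rule power2_norm_eq_inner)
  also have "\<dots> = (inner A A - 2 * inner A B + inner B B) / tau\<^sup>2"
    using assms by (simp add: inner_diff_left inner_diff_right inner_commute
      power2_eq_square field_simps)
  finally have n: "(norm ((1 / tau) *\<^sub>R (A - B)))\<^sup>2 = (inner A A - 2 * inner A B + inner B B) / tau\<^sup>2" .
  show ?thesis
    using assms inner_commute[of B A] unfolding n power2_norm_eq_inner[of A] power2_norm_eq_inner[of B]
    by (simp add: inner_diff_left inner_diff_right power2_eq_square field_simps)
qed

section \<open>Energy identities for the individual terms\<close>

lemma continuous_on_first_coord_comp:
  "continuous_on UNIV e \<Longrightarrow> continuous_on S (\<lambda>x::pt. e (x$1))"
  by (rule continuous_on_compose2[of UNIV e]) (auto intro: continuous_intros)

lemma fluid_energy_identity: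
  fixes u v :: "pt \<Rightarrow> real^2" and a b :: "real \<Rightarrow> real"
  assumes u: "continuous_on (Omega_hat_cl L1) u" and v: "continuous_on (Omega_hat_cl L1) v"
    and a: "continuous_on UNIV a" and b: "continuous_on UNIV b" and tau: "tau \<noteq> 0"
  shows "2 * tau * intO L1 (\<lambda>x. inner ((1 / tau) *\<^sub>R (u x - v x)) (u x) * a (x$1))
       + tau * intO L1 (\<lambda>x. (a (x$1) - b (x$1)) / tau * inner (2 *\<^sub>R v x - u x) (u x))
     = intO L1 (\<lambda>x. a (x$1) * (norm (u x))\<^sup>2) - intO L1 (\<lambda>x. b (x$1) * (norm (v x))\<^sup>2)
       + tau * tau * intO L1 (\<lambda>x. b (x$1) * (norm ((1 / tau) *\<^sub>R (u x - v x)))\<^sup>2)"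
proof -
  note cont = u v continuous_on_first_coord_comp[OF a] continuous_on_first_coord_comp[OF b]
  have int: "set_integrable lebesgue (Omega_hat L1) f" if "continuous_on (Omega_hat_cl L1) f"
    for f :: "pt \<Rightarrow> real"
    using that by (rule set_integrable_continuous_on_Omega_hat_cl)
  have "2 * tau * intO L1 (\<lambda>x. inner ((1 / tau) *\<^sub>R (u x - v x)) (u x) * a (x$1))
       + tau * intO L1 (\<lambda>x. (a (x$1) - b (x$1)) / tau * inner (2 *\<^sub>R v x - u x) (u x))
     = intO L1 (\<lambda>x. 2 * tau * (inner ((1 / tau) *\<^sub>R (u x - v x)) (u x) * a (x$1))
       + tau * ((a (x$1) - b (x$1)) / tau * inner (2 *\<^sub>R v x - u x) (u x)))"
    unfolding intO_def by (rule set_integral_add_mult[symmetric])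
      (intro int continuous_intros cont | simp add: tau)+
  also have "\<dots> = intO L1 (\<lambda>x. a (x$1) * (norm (u x))\<^sup>2 - b (x$1) * (norm (v x))\<^sup>2
       + tau * tau * (b (x$1) * (norm ((1 / tau) *\<^sub>R (u x - v x)))\<^sup>2))"
    by (simp only: weighted_backward_difference_identity[OF tau])
  also have "\<dots> = intO L1 (\<lambda>x. a (x$1) * (norm (u x))\<^sup>2) - intO L1 (\<lambda>x. b (x$1) * (norm (v x))\<^sup>2)
       + tau * tau * intO L1 (\<lambda>x. b (x$1) * (norm ((1 / tau) *\<^sub>R (u x - v x)))\<^sup>2)"
    unfolding intO_def by (rule set_integral_diff_add_mult)
      (intro int continuous_intros cont | simp add: tau)+
  finally show ?thesis .
qed

lemma intS_backward_difference_identity: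
  assumes f: "continuous_on {0..L1} f"
    and g: "continuous_on {0..L1} g" and h: "continuous_on {0..L1} h"
    and tau: "tau \<noteq> 0" and h_eq: "\<And>s. s \<in> {0<..<L1} \<Longrightarrow> h s = (f s - g s) / tau"
  shows "2 * tau * intS L1 (\<lambda>s. h s * f s)
       = intS L1 (\<lambda>s. (f s)\<^sup>2) - intS L1 (\<lambda>s. (g s)\<^sup>2) + tau * tau * intS L1 (\<lambda>s. (h s)\<^sup>2)"
proof -
  have pointwise: "2 * tau * (h s * f s) = (f s)\<^sup>2 - (g s)\<^sup>2 + tau * tau * (h s)\<^sup>2"
    if "s \<in> {0<..<L1}" for s
    unfolding h_eq[OF that] by (rule backward_difference_identity[OF tau])
  have "2 * tau * intS L1 (\<lambda>s. h s * f s) = intS L1 (\<lambda>s. 2 * tau * (h s * f s))"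
    by (simp add: intS_def)
  also have "\<dots> = intS L1 (\<lambda>s. (f s)\<^sup>2 - (g s)\<^sup>2 + tau * tau * (h s)\<^sup>2)"
    unfolding intS_def by (rule set_lebesgue_integral_cong) (simp_all add: pointwise)
  also have "\<dots> = intS L1 (\<lambda>s. (f s)\<^sup>2) - intS L1 (\<lambda>s. (g s)\<^sup>2) + tau * tau * intS L1 (\<lambda>s. (h s)\<^sup>2)"
    unfolding intS_def
    by (rule set_integral_diff_add_mult)
      (auto intro!: set_integrable_continuous_on_Icc continuous_intros f g h)
  finally show ?thesis .
qed

lemma intS_dx_backward_difference_identity:
  assumes lap: "is_disc_lap L1 T lap" and a: "a \<in> Vs_h L1 T" and b: "b \<in> Vs_h L1 T"
    and tau: "tau \<noteq> 0"
  defines "X \<equiv> \<lambda>s. (a s - b s) / tau"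
  shows "2 * tau * intS L1 (\<lambda>s. dx a s * dx X s)
       = intS L1 (\<lambda>s. (dx a s)\<^sup>2) - intS L1 (\<lambda>s. (dx b s)\<^sup>2) + tau * tau * intS L1 (\<lambda>s. (dx X s)\<^sup>2)"
proof -
  define B where "B f g = intS L1 (\<lambda>s. dx f s * dx g s)" for f g
  have sym: "B f g = B g f" for f g by (simp add: B_def mult.commute)
  have X: "X \<in> Vs_h L1 T" unfolding X_def by (rule Vs_h_diff_quotient[OF a b])
  have quotient: "tau * B c X = B c a - B c b" if "c \<in> Vs_h L1 T" for c
    using intS_dx_diff_quotient[OF lap that a b, of tau] tau by (simp add: B_def X_def)
  have "tau * (tau * B X X) = tau * B a X - tau * B b X"
    using quotient[OF X] sym[of X a] sym[of X b] by (simp add: right_diff_distrib)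
  then have "2 * tau * B a X = B a a - B b b + tau * tau * B X X"
    using quotient[OF a] quotient[OF b] sym[of b a] by simp
  then show ?thesis by (simp add: B_def power2_eq_square)
qed

lemma intS_disc_lap_backward_difference_identity:
  assumes lap: "is_disc_lap L1 T lap" and a: "a \<in> Vs_h L1 T" and b: "b \<in> Vs_h L1 T"
    and tau: "tau \<noteq> 0"
  defines "X \<equiv> \<lambda>s. (a s - b s) / tau"
  shows "2 * tau * intS L1 (\<lambda>s. dx (\<lambda>s. - lap a s) s * dx X s)
       = intS L1 (\<lambda>s. (lap a s)\<^sup>2) - intS L1 (\<lambda>s. (lap b s)\<^sup>2) + tau * tau * intS L1 (\<lambda>s. (lap X s)\<^sup>2)"
proof -
  have X: "X \<in> Vs_h L1 T" unfolding X_def by (rule Vs_h_diff_quotient[OF a b])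
  have la: "lap a \<in> Vs_h L1 T" and lb: "lap b \<in> Vs_h L1 T" and lX: "lap X \<in> Vs_h L1 T"
    using disc_lap_Vs_h[OF lap] a b X by blast+
  have na: "(\<lambda>s. - lap a s) \<in> Vs_h L1 T"
    using Vs_h_lincomb[OF la la, of "-1" 0] by simp
  have "intS L1 (\<lambda>s. dx (\<lambda>s. - lap a s) s * dx X s) = intS L1 (\<lambda>s. dx X s * dx (\<lambda>s. - lap a s) s)"
    by (simp only: mult.commute)
  also have "\<dots> = - intS L1 (\<lambda>s. lap X s * - lap a s)"
    using disc_lap_integral[OF lap X na] by simp
  also have "\<dots> = intS L1 (\<lambda>s. lap X s * lap a s)"
    using set_integral_mult_right[where a="-1" and f="\<lambda>s. lap X s * lap a s" and A="{0<..<L1}" and M=lebesgue]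
      by (simp add: intS_def)
  also have "2 * tau * \<dots>
      = intS L1 (\<lambda>s. (lap a s)\<^sup>2) - intS L1 (\<lambda>s. (lap b s)\<^sup>2) + tau * tau * intS L1 (\<lambda>s. (lap X s)\<^sup>2)"
  proof (rule intS_backward_difference_identity[OF _ _ _ tau])
    show "lap X s = (lap a s - lap b s) / tau" if "s \<in> {0<..<L1}" for s
      unfolding X_def by (rule disc_lap_diff_quotient[OF lap a b that])
  qed (auto intro: Vs_h_continuous_on la lb lX)
  finally show ?thesis by simp
qed

lemma viscous_dissipation_identity:
  assumes tri: "periodic_triangulation L1 T" and q: "q \<in> Qf_h L1 T" and u: "u \<in> Vf_h L1 T"
    and e: "e \<in> Vs_h L1 T" and pos: "\<And>s. s \<in> {0<..<L1} \<Longrightarrow> e s > 0"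
    and incompressible: "intO L1 (\<lambda>x. q x * frob (grad u x) (MM e x)) = 0"
  shows "intO L1 (\<lambda>x. frob ((2 * mu) *\<^sub>R symm (grad u x ** matrix_inv (FF e x)) - q x *\<^sub>R mat 1)
                           (grad u x ** matrix_inv (FF e x)) * e (x$1))
       = 2 * mu * intO L1 (\<lambda>x. e (x$1) * frob (symm (grad u x ** matrix_inv (FF e x)))
                                               (symm (grad u x ** matrix_inv (FF e x))))"
proof -
  have "intO L1 (\<lambda>x. frob ((2 * mu) *\<^sub>R symm (grad u x ** matrix_inv (FF e x)) - q x *\<^sub>R mat 1)
                           (grad u x ** matrix_inv (FF e x)) * e (x$1))
      = intO L1 (\<lambda>x. 2 * mu * (e (x$1) * frob (symm (grad u x ** matrix_inv (FF e x)))
                                                (symm (grad u x ** matrix_inv (FF e x))))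
                     - q x * frob (grad u x) (MM e x))"
    unfolding intO_def
    by (rule set_lebesgue_integral_cong)
      (auto simp: Omega_hat_eq_box intro!: stress_power_pointwise pos first_coord_in_Sigma)
  also have "\<dots> = intO L1 (\<lambda>x. 2 * mu * (e (x$1) * frob (symm (grad u x ** matrix_inv (FF e x)))
                                                      (symm (grad u x ** matrix_inv (FF e x)))))"
    unfolding intO_def
    by (rule set_integral_diff_integral_eq_0[OF set_integrable_incompressibility_term[OF tri q u e]])
      (use incompressible in \<open>simp add: intO_def\<close>)
  finally show ?thesis by (simp add: intO_def)
qed

lemma intS_elastic_split:
  assumes tri: "periodic_triangulation L1 T"
    and a: "a \<in> Vs_h L1 T" and z: "z \<in> Vs_h L1 T" and X: "X \<in> Vs_h L1 T"
  shows "intS L1 (\<lambda>s. g1 * dx a s * dx X s + g2 * dx z s * dx X s + g3 * dx X s * dx X s)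
       = g1 * intS L1 (\<lambda>s. dx a s * dx X s) + g2 * intS L1 (\<lambda>s. dx z s * dx X s)
         + g3 * intS L1 (\<lambda>s. (dx X s)\<^sup>2)"
  using set_integrable_dx_mult[OF tri a X] set_integrable_dx_mult[OF tri z X]
    set_integrable_dx_mult[OF tri X X]
  by (simp add: intS_def mult.assoc power2_eq_square)

lemma R2_form_self_test:
  "R2_form L1 lap rho_f rho_s mu g1 g2 g3 tau p u xi eta k (u k) (xi k) =
      rho_f * intO L1 (\<lambda>x. inner ((1 / tau) *\<^sub>R (u k x - u (k - 1) x)) (u k x) * eta k (x$1))
    + 1/2 * rho_f * intO L1 (\<lambda>x. (eta k (x$1) - eta (k - 1) (x$1)) / tau
                                  * inner (2 *\<^sub>R u (k - 1) x - u k x) (u k x))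
    + intO L1 (\<lambda>x. frob ((2 * mu) *\<^sub>R symm (grad (u k) x ** matrix_inv (FF (eta k) x))
      - p k x *\<^sub>R mat 1)
                        (grad (u k) x ** matrix_inv (FF (eta k) x)) * eta k (x$1))
    + rho_s * intS L1 (\<lambda>s. (xi k s - xi (k - 1) s) / tau * xi k s)
    + intS L1 (\<lambda>s. g1 * dx (eta (Suc k)) s * dx (xi k) s
      + g2 * dx (\<lambda>s. - lap (eta (Suc k)) s) s * dx (xi k) s
                   + g3 * dx (xi k) s * dx (xi k) s)"
  by (simp add: R2_form_def Let_def intO_def)

lemma schemeR_spaces:
  assumes "schemeR L1 T lap rho_f rho_s mu g1 g2 g3 tau N p u xi eta"
  shows "j \<le> Suc N \<Longrightarrow> eta j \<in> Vs_h L1 T" and "j \<le> N \<Longrightarrow> xi j \<in> Vs_h L1 T"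
    and "j \<le> N \<Longrightarrow> u j \<in> Vf_h L1 T"
proof -
  have init: "u 0 \<in> Vf_h L1 T" "xi 0 \<in> Vs_h L1 T" "eta 0 \<in> Vs_h L1 T"
    "eta 1 = (\<lambda>s. eta 0 s + tau * xi 0 s)"
    and step: "\<And>k. k \<in> {1..N} \<Longrightarrow> u k \<in> Vf_h L1 T \<and> xi k \<in> Vs_h L1 T \<and> eta (Suc k) \<in> Vs_h L1 T"
    using assms unfolding schemeR_def by blast+
  have eta1: "eta 1 \<in> Vs_h L1 T"
    using Vs_h_lincomb[OF init(3,2), of 1 tau] init(4) by simp
  show "eta j \<in> Vs_h L1 T" if j: "j \<le> Suc N"
  proof (cases "j \<le> 1")
    case True
    then have "j = 0 \<or> j = 1" by auto
    then show ?thesis using init(3) eta1 by auto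
  next
    case False
    then have "j - 1 \<in> {1..N}" "Suc (j - 1) = j" using j by auto
    then show ?thesis using step[of "j - 1"] by simp
  qed
  show "j \<le> N \<Longrightarrow> xi j \<in> Vs_h L1 T" and "j \<le> N \<Longrightarrow> u j \<in> Vf_h L1 T"
    using init step[of j] by (cases "j = 0"; simp)+
qed

lemma energy_balance_from_term_identities:
  fixes tau rho_f rho_s mu g1 g2 g3 :: real
  assumes tested: "rho_f * FAcc + 1/2 * rho_f * FGeo + FStress + rho_s * SAcc + SElast = 0"
    and fluid: "2 * tau * FAcc + tau * FGeo = Kin - Kin' + tau * tau * DKin"
    and viscous: "FStress = 2 * mu * Visc"
    and inertia: "2 * tau * SAcc = Str - Str' + tau * tau * DStr"
    and elastic: "SElast = g1 * B1 + g2 * B2 + g3 * DMem"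
    and membrane: "2 * tau * B1 = Mem - Mem' + tau * tau * DMem"
    and bending: "2 * tau * B2 = Bend - Bend' + tau * tau * DBend"
  shows "(rho_f / 2 * Kin + rho_s / 2 * Str + g1 / 2 * Mem + g2 / 2 * Bend)
       + tau * (2 * mu * Visc + g3 * DMem
                + (rho_f * tau / 2 * DKin + rho_s * tau / 2 * DStr
                  + g1 * tau / 2 * DMem + g2 * tau / 2 * DBend))
     = rho_f / 2 * Kin' + rho_s / 2 * Str' + g1 / 2 * Mem' + g2 / 2 * Bend'"
proof -
  have "rho_f / 2 * (2 * tau * FAcc + tau * FGeo) + tau * FStress + rho_s / 2 * (2 * tau * SAcc)
      + g1 / 2 * (2 * tau * B1) + g2 / 2 * (2 * tau * B2) + tau * g3 * DMem = 0"
    using arg_cong[OF tested, of "(*) tau"] elastic by (simp add: algebra_simps)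
  then show ?thesis
    unfolding fluid viscous inertia membrane bending by (simp add: algebra_simps)
qed

lemma schemeR_energy_step:
  assumes tau: "tau > 0" and tri: "periodic_triangulation L1 T" and lap: "is_disc_lap L1 T lap"
    and sch: "schemeR L1 T lap rho_f rho_s mu g1 g2 g3 tau N p u xi eta"
    and pos: "\<forall>k \<le> Suc N. \<forall>s\<in>{0<..<L1}. eta k s > 0" and k: "k \<in> {1..N}"
  shows "energy L1 lap rho_f rho_s g1 g2 u xi eta k
       + tau * (2 * mu * intO L1 (\<lambda>x. eta k (x$1) *
                  frob (symm (grad (u k) x ** matrix_inv (FF (eta k) x)))
                       (symm (grad (u k) x ** matrix_inv (FF (eta k) x))))
              + g3 * intS L1 (\<lambda>s. (dx (xi k) s)\<^sup>2)
              + Dnum L1 lap rho_f rho_s g1 g2 tau u xi eta k)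
     = energy L1 lap rho_f rho_s g1 g2 u xi eta (k - 1)"
proof -
  have k1: "1 \<le> k" "k \<le> N" "Suc (k - 1) = k" using k by auto
  have tau0: "tau \<noteq> 0" using tau by simp
  have p: "p k \<in> Qf_h L1 T"
    and xi_eq: "xi k = (\<lambda>s. (eta (Suc k) s - eta k s) / tau)"
    and incompressible: "intO L1 (\<lambda>x. p k x * frob (grad (u k) x) (MM (eta k) x)) = 0"
    and tested: "R2_form L1 lap rho_f rho_s mu g1 g2 g3 tau p u xi eta k (u k) (xi k) = 0"
    using sch k schemeR_spaces[OF sch, of k] unfolding schemeR_def by auto
  have eta: "eta (Suc k) \<in> Vs_h L1 T" "eta k \<in> Vs_h L1 T" "eta (k - 1) \<in> Vs_h L1 T"
    and xi: "xi k \<in> Vs_h L1 T" "xi (k - 1) \<in> Vs_h L1 T"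
    and u: "u k \<in> Vf_h L1 T" "u (k - 1) \<in> Vf_h L1 T"
    using schemeR_spaces[OF sch] k1 by auto
  have cont_u: "continuous_on (Omega_hat_cl L1) (u j)" if "u j \<in> Vf_h L1 T" for j
    using that Omega_hat_cl_subset_strip by (auto simp: Vf_h_def intro: continuous_on_subset)
  have cont_eta: "continuous_on UNIV (eta k)" "continuous_on UNIV (eta (k - 1))"
    using eta by (auto intro: Vs_h_continuous_on)
  have cont_xi: "continuous_on {0..L1} (xi k)" "continuous_on {0..L1} (xi (k - 1))"
    "continuous_on {0..L1} (\<lambda>s. (xi k s - xi (k - 1) s) / tau)"
    using xi Vs_h_diff_quotient[OF xi] by (auto intro: Vs_h_continuous_on)
  have pos_k: "\<And>s. s \<in> {0<..<L1} \<Longrightarrow> eta k s > 0"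
    using pos k1 by auto
  have zeta: "(\<lambda>s. - lap (eta (Suc k)) s) \<in> Vs_h L1 T"
    using Vs_h_lincomb[OF disc_lap_Vs_h[OF lap eta(1)] disc_lap_Vs_h[OF lap eta(1)], of "-1" 0] by simp
  show ?thesis
    unfolding energy_def Dnum_def k1(3)
    by (rule energy_balance_from_term_identities[OF tested[unfolded R2_form_self_test]
          fluid_energy_identity[OF cont_u[OF u(1)] cont_u[OF u(2)] cont_eta tau0]
          viscous_dissipation_identity[OF tri p u(1) eta(2) pos_k incompressible]
          intS_backward_difference_identity[OF cont_xi tau0]
          intS_elastic_split[OF tri eta(1) zeta xi(1)]
          intS_dx_backward_difference_identity[OF lap eta(1,2) tau0, folded xi_eq]
          intS_disc_lap_backward_difference_identity[OF lap eta(1,2) tau0, folded xi_eq]])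
      simp_all
qed

lemma telescoping_dissipation:
  fixes E V :: "nat \<Rightarrow> real"
  assumes "\<And>k. k \<in> {1..N} \<Longrightarrow> E k + tau * V k = E (k - 1)" and "m \<le> N"
  shows "E m + tau * (\<Sum>k=1..m. V k) = E 0"
  using assms(2)
proof (induction m)
  case (Suc m)
  then have "E m + tau * (\<Sum>k=1..m. V k) = E 0" by simp
  moreover have "E (Suc m) + tau * V (Suc m) = E m" using assms(1)[of "Suc m"] Suc.prems by simp
  ultimately show ?case by (simp add: algebra_simps)
qed simp

theorem mainTheorem5:
  fixes L1 tau rho_f rho_s mu g1 g2 g3 :: real
    and N :: nat
    and T :: "pt set set"
    and lap :: "(real \<Rightarrow> real) \<Rightarrow> real \<Rightarrow> real"
    and p :: "nat \<Rightarrow> pt \<Rightarrow> real"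
    and u :: "nat \<Rightarrow> pt \<Rightarrow> real^2"
    and xi eta :: "nat \<Rightarrow> real \<Rightarrow> real"
  assumes "L1 > 0" and "tau > 0"
    and "rho_f > 0" and "rho_s > 0" and "mu > 0" and "g1 > 0" and "g2 > 0" and "g3 \<ge> 0"
    and "periodic_triangulation L1 T"
    and "is_disc_lap L1 T lap"
    and "schemeR L1 T lap rho_f rho_s mu g1 g2 g3 tau N p u xi eta"
    and "\<forall>k \<le> Suc N. \<forall>s\<in>{0<..<L1}. eta k s > 0"
  shows "\<forall>m\<in>{1..N}.
     energy L1 lap rho_f rho_s g1 g2 u xi eta m
     + tau * (\<Sum>k=1..m.
          2 * mu * intO L1 (\<lambda>x. eta k (x$1) *
               frob (symm (grad (u k) x ** matrix_inv (FF (eta k) x)))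
                    (symm (grad (u k) x ** matrix_inv (FF (eta k) x))))
        + g3 * intS L1 (\<lambda>s. (dx (xi k) s)\<^sup>2)
        + Dnum L1 lap rho_f rho_s g1 g2 tau u xi eta k)
     = energy L1 lap rho_f rho_s g1 g2 u xi eta 0"
  by (intro ballI telescoping_dissipation[where E = "energy L1 lap rho_f rho_s g1 g2 u xi eta"]
      schemeR_energy_step[OF assms(2,9-12)]) auto

end
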